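(* Suppose $\underline\nu^*(A^* )=\{\underline\nu^0\}$ is a singleton for some $A^*\in\mathbf S^k_{++}$, and $A^{(N)}\in\mathbf S^k_{++}$ with $A^{(N)}\to A^*$. Then for every $\varepsilon>0$ there is $N_1$ such that $\|\underline n/t-\underline\nu^0\|<\varepsilon$ whenever $\underline n\in\underline n^*_t(A^{(N)})$ and $N,t\ge N_1$.
   Context: $\mathbf S^k_{++}$ is the set of $k\times k$ symmetric positive-definite matrices. $\mathcal I$ is a collection of nonempty subsets of $\{1,\dots,k\}$, $a\in\mathbb{R}^k\setminus\{0\}$ with $\operatorname{supp}(a)\subseteq\bigcup\mathcal I$. $P_I:\mathbb{R}^k\to\mathbb{R}^{|I|}$ is the coordinate projection onto $I$, and for $A\in\mathbf S^k_{++}$, $A_I^\dagger:=(P_I^\top P_IAP_I^\top P_I)^\dagger=P_I^\top(P_IAP_I^\top)^{-1}P_I$. Costs $c_I\in\mathbb{R}^m_{\ge0}$, each with at least one positive coordinate, and $B_0\in\mathbb{R}^m_{>0}$; vector inequalities componentwise. $K=\{\underline\nu\in\mathbb{R}^{\mathcal I}:\underline\nu\ge0,\ \sum_I\nu_Ic_I\le B_0\}$. $F(\underline\nu,A)=a^\top(\sum_I\nu_IA_I^\dagger)^\dagger a$ if $a\in\operatorname{range}(\sum_I\nu_IA_I^\dagger)$ and $F(\underline\nu,A)=\infty$ otherwise. $\underline\nu^*(A)=\operatorname{argmin}_{\underline\nu\in K}F(\underline\nu,A)$ (a set). For $t>0$, $\underline n^*_t(A)$ is the set of minimizers of $a^\top(\sum_In_IA_I^\dagger)^\dagger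 a$ over $\underline n\in\mathbb{Z}^{\mathcal I}_{\ge0}$ with $\sum_In_Ic_I\le tB_0$ and $\operatorname{supp}(a)\subseteq\bigcup\{I:n_I>0\}$. *)

theory Defs
  imports "HOL-Analysis.Analysis"
begin

definition pinv :: "real^'k^'k \<Rightarrow> real^'k^'k" where
  "pinv M = (THE X. M ** X ** M = M \<and> X ** M ** X = X \<and>
                    transpose (M ** X) = M ** X \<and> transpose (X ** M) = X ** M)"

definition sym_pd :: "real^'k^'k \<Rightarrow> bool" where
  "sym_pd A \<longleftrightarrow> transpose A = A \<and> (\<forall>x. x \<noteq> 0 \<longrightarrow> x \<bullet> (A *v x) > 0)"

text \<open>P_I^T P_I A P_I^T P_I : keep the I x I block, zero elsewhere.\<close>
definition maskI :: "'k set \<Rightarrow> real^'k^'k \<Rightarrow> real^'k^'k" where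
  "maskI I A = (\<chi> i j. if i \<in> I \<and> j \<in> I then A $ i $ j else 0)"

definition Adag :: "'k set \<Rightarrow> real^'k^'k \<Rightarrow> real^'k^'k" where
  "Adag I A = pinv (maskI I A)"

definition infoM :: "'k set set \<Rightarrow> ('k set \<Rightarrow> real) \<Rightarrow> real^'k^'k \<Rightarrow> real^'k^'k" where
  "infoM \<I> \<nu> A = (\<Sum>I\<in>\<I>. \<nu> I *\<^sub>R Adag I A)"

definition Fobj :: "'k set set \<Rightarrow> real^'k \<Rightarrow> ('k set \<Rightarrow> real) \<Rightarrow> real^'k^'k \<Rightarrow> ereal" where
  "Fobj \<I> a \<nu> A = (if a \<in> range (\<lambda>x. infoM \<I> \<nu> A *v x)
                    then ereal (a \<bullet> (pinv (infoM \<I> \<nu> A) *v a)) else \<infinity>)"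

text \<open>Elements of R^\<I> are functions vanishing outside \<I>.\<close>
definition Kset :: "'k set set \<Rightarrow> ('k set \<Rightarrow> real^'m) \<Rightarrow> real^'m \<Rightarrow> ('k set \<Rightarrow> real) set" where
  "Kset \<I> c B0 = {\<nu>. (\<forall>I. I \<notin> \<I> \<longrightarrow> \<nu> I = 0) \<and> (\<forall>I\<in>\<I>. \<nu> I \<ge> 0) \<and>
                     (\<forall>j. (\<Sum>I\<in>\<I>. \<nu> I * c I $ j) \<le> B0 $ j)}"

definition nu_star :: "'k set set \<Rightarrow> real^'k \<Rightarrow> ('k set \<Rightarrow> real^'m) \<Rightarrow> real^'m \<Rightarrow> real^'k^'k
                        \<Rightarrow> ('k set \<Rightarrow> real) set" where
  "nu_star \<I> a c B0 A = {\<nu> \<in> Kset \<I> c B0. \<forall>\<mu> \<in> Kset \<I> c B0. Fobj \<I> a \<nu> A \<le> Fobj \<I> a \<mu> A}"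

definition Nfeas :: "'k set set \<Rightarrow> real^'k \<Rightarrow> ('k set \<Rightarrow> real^'m) \<Rightarrow> real^'m \<Rightarrow> real
                      \<Rightarrow> ('k set \<Rightarrow> nat) set" where
  "Nfeas \<I> a c B0 t = {n. (\<forall>I. I \<notin> \<I> \<longrightarrow> n I = 0) \<and>
                     (\<forall>j. (\<Sum>I\<in>\<I>. real (n I) * c I $ j) \<le> t * B0 $ j) \<and>
                     {i. a $ i \<noteq> 0} \<subseteq> \<Union>{I\<in>\<I>. n I > 0}}"

definition n_star :: "'k set set \<Rightarrow> real^'k \<Rightarrow> ('k set \<Rightarrow> real^'m) \<Rightarrow> real^'m \<Rightarrow> real
                       \<Rightarrow> real^'k^'k \<Rightarrow> ('k set \<Rightarrow> nat) set" where
  "n_star \<I> a c B0 t A = {n \<in> Nfeas \<I> a c B0 t. \<forall>m \<in> Nfeas \<I> a c B0 t.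
       a \<bullet> (pinv (infoM \<I> (\<lambda>I. real (n I)) A) *v a) \<le> a \<bullet> (pinv (infoM \<I> (\<lambda>I. real (m I)) A) *v a)}"

end

theory Submission
  imports Defs
begin

(* The key is the variational formula a' M^+ a = max_x (2 a'x - x'Mx) for a symmetric M that is
   positive definite on a coordinate block J containing supp a and zero outside it.  Applied to
   the information matrix sum_I nu_I A_I^+, it writes the objective F(nu, A) as a supremum of
   functions that are affine in nu, antitone in nu and continuous in A; hence F is lower
   semicontinuous along (n/t, A^(N)) -> (nu, Astar).  Given any competitor mu in K, the rounded-down
   allocations floor(t mu) are feasible, so the optimal n beat them, and their proportions tend
   to mu.  Therefore every limit point of n/t is optimal for Astar, i.e. equals nu0; since the budget
   bounds n/t, compactness gives convergence. *)

definition penrose_eqs :: "real^'k^'k \<Rightarrow> real^'k^'k \<Rightarrow> bool" where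
  "penrose_eqs M X \<longleftrightarrow> M ** X ** M = M \<and> X ** M ** X = X \<and>
     transpose (M ** X) = M ** X \<and> transpose (X ** M) = X ** M"

lemma penrose_eqs_unique:
  assumes "penrose_eqs M X" "penrose_eqs M Y" shows "X = Y"
proof -
  have X1: "M ** X ** M = M" and X2: "X ** M ** X = X" and X3: "transpose (M ** X) = M ** X"
    and X4: "transpose (X ** M) = X ** M" using assms(1) by (auto simp: penrose_eqs_def)
  have Y1: "M ** Y ** M = M" and Y2: "Y ** M ** Y = Y" and Y3: "transpose (M ** Y) = M ** Y"
    and Y4: "transpose (Y ** M) = Y ** M" using assms(2) by (auto simp: penrose_eqs_def)
  have "X = X ** (M ** X)" using X2 by (simp add: matrix_mul_assoc)
  also have "\<dots> = X ** (transpose X ** transpose M)" using X3 by (metis matrix_transpose_mul)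
  also have "transpose M = transpose M ** transpose Y ** transpose M"
    using Y1 by (metis matrix_transpose_mul matrix_mul_assoc)
  also have "X ** (transpose X ** (transpose M ** transpose Y ** transpose M))
       = X ** (transpose (M ** X)) ** (transpose (M ** Y))"
    by (simp add: matrix_transpose_mul matrix_mul_assoc)
  also have "\<dots> = X ** M ** X ** (M ** Y)" using X3 Y3 by (simp add: matrix_mul_assoc)
  also have "\<dots> = X ** M ** Y" using X2 by (simp add: matrix_mul_assoc)
  finally have XMY: "X = X ** M ** Y" .
  have "Y = (Y ** M) ** Y" using Y2 by (simp add: matrix_mul_assoc)
  also have "\<dots> = transpose M ** transpose Y ** Y" using Y4 by (metis matrix_transpose_mul)
  also have "transpose M = transpose M ** transpose X ** transpose M"
    using X1 by (metis matrix_transpose_mul matrix_mul_assoc)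
  also have "transpose M ** transpose X ** transpose M ** transpose Y ** Y
       = transpose (X ** M) ** transpose (Y ** M) ** Y"
    by (simp add: matrix_transpose_mul matrix_mul_assoc)
  also have "\<dots> = X ** M ** (Y ** M ** Y)" using X4 Y4 by (simp add: matrix_mul_assoc)
  also have "\<dots> = X ** M ** Y" using Y2 by simp
  finally show ?thesis using XMY by simp
qed

lemma pinv_eqI: "penrose_eqs M X \<Longrightarrow> pinv M = X"
  unfolding pinv_def
  by (rule the1_equality) (auto simp: penrose_eqs_def[symmetric] intro: penrose_eqs_unique)

lemma matrix_mult_entry: "(A ** B) $ i $ j = (\<Sum>k\<in>UNIV. A $ i $ k * B $ k $ j)"
  by (simp add: matrix_matrix_mult_def)

lemma matrix_vector_mult_entry: "(M *v x) $ i = (\<Sum>j\<in>UNIV. M $ i $ j * x $ j)"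
  by (simp add: matrix_vector_mult_def)

lemma matrix_add_rdistrib: "(A + B) ** (C :: 'a::semiring_1^'n^'m) = A ** C + B ** C"
  by (simp add: vec_eq_iff matrix_mult_entry algebra_simps sum.distrib)

lemma matrix_diff_rdistrib: "(A - B) ** (C :: 'a::ring_1^'n^'m) = A ** C - B ** C"
  by (simp add: vec_eq_iff matrix_mult_entry algebra_simps sum_subtractf)

lemma matrix_diff_ldistrib: "(C :: 'a::ring_1^'n^'m) ** (A - B) = C ** A - C ** B"
  by (simp add: vec_eq_iff matrix_mult_entry algebra_simps sum_subtractf)

lemma transpose_diff: "transpose (A - B) = transpose A - transpose (B :: 'a::ring_1^'n^'m)"
  by (simp add: vec_eq_iff transpose_def)

lemma sum_matrix_vector_mult: "sum f S *v (x :: real^'n) = (\<Sum>s\<in>S. f s *v x)"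
  by (simp add: vec_eq_iff matrix_vector_mult_entry sum_component sum_distrib_right sum.swap[of _ UNIV])

lemma inner_matrix_vector_mult: "x \<bullet> ((M :: real^'n^'m) *v y) = (transpose M *v x) \<bullet> y"
  by (simp only: transpose_matrix_vector dot_lmul_matrix)

lemma symmetric_inner_swap:
  assumes "transpose (M :: real^'n^'n) = M" shows "x \<bullet> (M *v y) = y \<bullet> (M *v x)"
  using inner_matrix_vector_mult[of x M y] assms by (simp add: inner_commute)

lemma symmetric_entry_swap: "transpose M = M \<Longrightarrow> M $ j $ i = M $ i $ j"
  by (metis transpose_def vec_lambda_beta)

lemma quadratic_form_eq_sum: "z \<bullet> (M *v z) = (\<Sum>i\<in>UNIV. z $ i * (\<Sum>j\<in>UNIV. M $ i $ j * z $ j))"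
  by (simp add: inner_vec_def matrix_vector_mult_entry)

definition diag_mat :: "('k::finite \<Rightarrow> real) \<Rightarrow> real^'k^'k" where
  "diag_mat f = (\<chi> i j. if i = j then f i else 0)"

lemma matrix_mult_diag_mat_right: "(M ** diag_mat f) $ i $ j = M $ i $ j * f j"
  by (simp add: matrix_mult_entry diag_mat_def if_distrib if_distribR cong: if_cong)

lemma matrix_mult_diag_mat_left: "(diag_mat f ** M) $ i $ j = f i * M $ i $ j"
  by (simp add: matrix_mult_entry diag_mat_def if_distrib if_distribR cong: if_cong)

lemma diag_mat_mult_vector: "(diag_mat f *v x) $ i = f i * x $ i"
  by (simp add: matrix_vector_mult_def diag_mat_def if_distrib if_distribR cong: if_cong)

lemma transpose_diag_mat: "transpose (diag_mat f) = diag_mat f"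
  by (simp add: vec_eq_iff transpose_def diag_mat_def)

definition coord_proj :: "'k::finite set \<Rightarrow> real^'k^'k" where
  "coord_proj J = diag_mat (\<lambda>i. of_bool (i \<in> J))"

lemma coord_proj_mult_vector: "(coord_proj J *v x) $ i = (if i \<in> J then x $ i else 0)"
  by (simp add: coord_proj_def diag_mat_mult_vector)

lemma transpose_coord_proj: "transpose (coord_proj J) = coord_proj J"
  by (simp add: coord_proj_def transpose_diag_mat)

lemma coord_proj_idem: "coord_proj J ** coord_proj J = coord_proj J"
  by (simp add: vec_eq_iff coord_proj_def matrix_mult_diag_mat_right) (simp add: diag_mat_def)

lemma coord_proj_compl: "coord_proj J = mat 1 - coord_proj (- J)"
  by (simp add: vec_eq_iff coord_proj_def diag_mat_def mat_def)

lemma coord_proj_fixes: "(\<forall>i. i \<notin> J \<longrightarrow> x $ i = 0) \<Longrightarrow> coord_proj J *v x = x"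
  by (simp add: vec_eq_iff coord_proj_mult_vector)

lemma quadratic_form_coord_proj:
  "x \<bullet> ((coord_proj J ** M ** coord_proj J) *v x) = (coord_proj J *v x) \<bullet> (M *v (coord_proj J *v x))"
  by (simp add: inner_matrix_vector_mult[of x] matrix_vector_mul_assoc[symmetric] transpose_coord_proj)

definition block_supported :: "'k::finite set \<Rightarrow> real^'k^'k \<Rightarrow> bool" where
  "block_supported J M \<longleftrightarrow> (\<forall>i j. i \<notin> J \<or> j \<notin> J \<longrightarrow> M $ i $ j = 0)"

lemma block_supported_iff: "block_supported J M \<longleftrightarrow> coord_proj J ** M ** coord_proj J = M"
  by (auto simp: block_supported_def vec_eq_iff coord_proj_def matrix_mult_diag_mat_right
      matrix_mult_diag_mat_left)

lemma block_supported_mult_compl: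
  assumes "block_supported J M" shows "M ** coord_proj (- J) = 0" "coord_proj (- J) ** M = 0"
  using assms by (auto simp: vec_eq_iff coord_proj_def matrix_mult_diag_mat_right
      matrix_mult_diag_mat_left block_supported_def)

lemma block_supported_mult_vector:
  "block_supported J M \<Longrightarrow> i \<notin> J \<Longrightarrow> (M *v x) $ i = 0"
  by (simp add: matrix_vector_mult_entry block_supported_def)

lemma block_supported_quadratic_form:
  "block_supported J M \<Longrightarrow> x \<bullet> (M *v x) = (coord_proj J *v x) \<bullet> (M *v (coord_proj J *v x))"
  by (metis block_supported_iff quadratic_form_coord_proj)

(* The common shape of A_I^dagger (with J = I) and of the information matrix (with J the union
   of the supported blocks). *)
definition pd_on :: "'k::finite set \<Rightarrow> real^'k^'k \<Rightarrow> bool" where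
  "pd_on J M \<longleftrightarrow> transpose M = M \<and> block_supported J M \<and>
     (\<forall>x. x \<noteq> 0 \<and> (\<forall>i. i \<notin> J \<longrightarrow> x $ i = 0) \<longrightarrow> 0 < x \<bullet> (M *v x))"

lemma pd_on_nonneg:
  assumes "pd_on J M" shows "0 \<le> x \<bullet> (M *v x)"
proof -
  let ?y = "coord_proj J *v x"
  have "x \<bullet> (M *v x) = ?y \<bullet> (M *v ?y)"
    using assms by (simp add: pd_on_def block_supported_quadratic_form)
  moreover have "\<forall>i. i \<notin> J \<longrightarrow> ?y $ i = 0" by (simp add: coord_proj_mult_vector)
  ultimately show ?thesis
    using assms by (cases "?y = 0") (auto simp: pd_on_def intro: less_imp_le)
qed

lemma pd_on_shift_invertible:
  assumes "pd_on J M" shows "invertible (M + coord_proj (- J))"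
proof -
  have B: "block_supported J M"
    and pd: "\<And>x. x \<noteq> 0 \<Longrightarrow> \<forall>i. i \<notin> J \<longrightarrow> x $ i = 0 \<Longrightarrow> 0 < x \<bullet> (M *v x)"
    using assms by (auto simp: pd_on_def)
  have "x = 0" if x: "(M + coord_proj (- J)) *v x = 0" for x
  proof -
    have outside: "\<forall>i. i \<notin> J \<longrightarrow> x $ i = 0"
    proof (intro allI impI)
      fix i assume i: "i \<notin> J"
      have "((M + coord_proj (- J)) *v x) $ i = 0" using x by simp
      then show "x $ i = 0"
        using i block_supported_mult_vector[OF B i, of x]
        by (simp add: matrix_vector_mult_add_rdistrib coord_proj_mult_vector)
    qed
    then have "coord_proj (- J) *v x = 0" by (simp add: vec_eq_iff coord_proj_mult_vector)
    then have "M *v x = 0" using x by (simp add: matrix_vector_mult_add_rdistrib)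
    then show "x = 0" using pd[of x] outside by fastforce
  qed
  then show ?thesis
    using matrix_left_invertible_ker invertible_left_inverse by blast
qed

(* Padding M with the identity outside J makes it invertible; removing the padding from the
   inverse again yields a solution of the Penrose equations. *)
lemma pinv_pd_on:
  assumes "pd_on J M"
  obtains H where "H ** (M + coord_proj (- J)) = mat 1" "(M + coord_proj (- J)) ** H = mat 1"
    "pinv M = H - coord_proj (- J)" "penrose_eqs M (pinv M)"
proof -
  define E where "E = coord_proj (- J)"
  define G where "G = M + E"
  obtain H where HG: "H ** G = mat 1" and GH: "G ** H = mat 1"
    using pd_on_shift_invertible[OF assms] unfolding invertible_def G_def E_def by blast
  have ME: "M ** E = 0" and EM: "E ** M = 0"
    using assms block_supported_mult_compl by (auto simp: E_def pd_on_def)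
  have EE: "E ** E = E" by (simp add: E_def coord_proj_idem)
  have HE: "H ** E = E" by (metis G_def HG matrix_add_rdistrib ME EE add_0 matrix_mul_assoc matrix_mul_lid)
  have EH: "E ** H = E" by (metis G_def GH matrix_add_ldistrib EM EE add_0 matrix_mul_assoc matrix_mul_rid)
  have MX: "M ** (H - E) = mat 1 - E"
    by (simp add: matrix_diff_ldistrib ME) (metis G_def GH EH add_diff_cancel matrix_diff_rdistrib)
  have XM: "(H - E) ** M = mat 1 - E"
    by (simp add: matrix_diff_rdistrib EM) (metis G_def HG HE add_diff_cancel matrix_diff_ldistrib)
  have "transpose E = E" by (simp add: E_def transpose_coord_proj)
  moreover have "(mat 1 - E) ** M = M" by (simp add: matrix_diff_rdistrib EM)
  moreover have "(mat 1 - E) ** (H - E) = H - E" by (simp add: matrix_diff_rdistrib matrix_diff_ldistrib EH EE)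
  ultimately have "penrose_eqs M (H - E)"
    unfolding penrose_eqs_def using MX XM by (simp add: matrix_mul_assoc[symmetric] transpose_diff)
  moreover from this have "pinv M = H - E" by (rule pinv_eqI)
  ultimately show ?thesis using that[of H] HG GH by (simp add: G_def E_def)
qed

lemma pd_on_mult_pinv:
  assumes "pd_on J M" shows "M ** pinv M = coord_proj J" "pinv M ** M = coord_proj J"
proof -
  obtain H where HG: "H ** (M + coord_proj (- J)) = mat 1" and GH: "(M + coord_proj (- J)) ** H = mat 1"
    and p: "pinv M = H - coord_proj (- J)"
    using pinv_pd_on[OF assms] by metis
  have B: "block_supported J M" using assms by (simp add: pd_on_def)
  note E = block_supported_mult_compl[OF B] coord_proj_idem[of "- J"]
  have "coord_proj (- J) ** H = coord_proj (- J)"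
    using GH by (metis E matrix_add_ldistrib add_0 matrix_mul_assoc matrix_mul_rid)
  then show "M ** pinv M = coord_proj J"
    using GH by (metis p E coord_proj_compl add_diff_cancel matrix_add_rdistrib matrix_diff_ldistrib
        matrix_diff_rdistrib diff_zero)
  have "H ** coord_proj (- J) = coord_proj (- J)"
    using HG by (metis E matrix_add_rdistrib add_0 matrix_mul_assoc matrix_mul_lid)
  then show "pinv M ** M = coord_proj J"
    using HG by (metis p E coord_proj_compl add_diff_cancel matrix_add_ldistrib matrix_diff_rdistrib
        matrix_diff_ldistrib diff_zero)
qed

lemma penrose_eqs_transpose:
  assumes "penrose_eqs M X" "transpose M = M" shows "penrose_eqs M (transpose X)"
  using assms unfolding penrose_eqs_def
  by (metis matrix_transpose_mul matrix_mul_assoc transpose_transpose)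

lemma pd_on_pinv:
  assumes "pd_on J M" shows "pd_on J (pinv M)"
proof -
  let ?X = "pinv M"
  have P: "penrose_eqs M ?X" using pinv_pd_on[OF assms] by metis
  have sym: "transpose M = M" using assms by (simp add: pd_on_def)
  have MX: "M ** ?X = coord_proj J" and XM: "?X ** M = coord_proj J"
    using pd_on_mult_pinv[OF assms] by auto
  have "transpose ?X = ?X"
    using penrose_eqs_unique[OF P penrose_eqs_transpose[OF P sym]] by simp
  moreover have B: "block_supported J ?X"
  proof -
    have "coord_proj J ** ?X ** coord_proj J = (?X ** M) ** ?X ** (M ** ?X)"
      by (simp only: MX XM)
    also have "\<dots> = (?X ** M ** ?X) ** M ** ?X" by (simp only: matrix_mul_assoc)
    also have "\<dots> = ?X" using P by (simp add: penrose_eqs_def)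
    finally show ?thesis by (simp add: block_supported_iff)
  qed
  moreover have "0 < x \<bullet> (?X *v x)" if x0: "x \<noteq> 0" and x: "\<forall>i. i \<notin> J \<longrightarrow> x $ i = 0" for x
  proof -
    have Mx: "M *v (?X *v x) = x" using x by (simp add: matrix_vector_mul_assoc MX coord_proj_fixes)
    have "?X *v x \<noteq> 0" using Mx x0 by auto
    then have "0 < (?X *v x) \<bullet> (M *v (?X *v x))"
      using assms block_supported_mult_vector[OF B] unfolding pd_on_def by blast
    then show ?thesis by (simp add: Mx inner_commute)
  qed
  ultimately show ?thesis by (simp add: pd_on_def)
qed

lemma pd_on_pinv_solves:
  assumes M: "pd_on J M" and a: "{i. a $ i \<noteq> 0} \<subseteq> J"
  shows "M *v (pinv M *v a) = a"
  using a pd_on_mult_pinv(1)[OF M] coord_proj_fixes[of J a] by (auto simp: matrix_vector_mul_assoc)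

lemma pd_on_pinv_quadratic_sup:
  assumes M: "pd_on J M" and a: "{i. a $ i \<noteq> 0} \<subseteq> J"
  shows "2 * (a \<bullet> x) - x \<bullet> (M *v x) \<le> a \<bullet> (pinv M *v a)"
    and "2 * (a \<bullet> (pinv M *v a)) - (pinv M *v a) \<bullet> (M *v (pinv M *v a)) = a \<bullet> (pinv M *v a)"
proof -
  have sym: "transpose M = M" using M by (simp add: pd_on_def)
  define y where "y = pinv M *v a"
  have My: "M *v y = a" unfolding y_def using M a by (rule pd_on_pinv_solves)
  have ay: "a \<bullet> y = y \<bullet> (M *v y)" using My by (simp add: inner_commute)
  have ax: "a \<bullet> x = y \<bullet> (M *v x)" using My symmetric_inner_swap[OF sym, of x y] by (simp add: inner_commute)
  have "0 \<le> (x - y) \<bullet> (M *v (x - y))" using pd_on_nonneg[OF M] .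
  also have "\<dots> = x \<bullet> (M *v x) - 2 * (y \<bullet> (M *v x)) + y \<bullet> (M *v y)"
    using symmetric_inner_swap[OF sym, of x y]
    by (simp add: matrix_vector_mult_diff_distrib inner_diff_left inner_diff_right)
  finally show "2 * (a \<bullet> x) - x \<bullet> (M *v x) \<le> a \<bullet> (pinv M *v a)"
    using ax ay by (simp add: y_def[symmetric])
  show "2 * (a \<bullet> (pinv M *v a)) - (pinv M *v a) \<bullet> (M *v (pinv M *v a)) = a \<bullet> (pinv M *v a)"
    using ay by (simp add: y_def[symmetric])
qed

lemma range_pd_on:
  assumes "pd_on J M" shows "a \<in> range (\<lambda>x. M *v x) \<longleftrightarrow> {i. a $ i \<noteq> 0} \<subseteq> J"
proof
  assume "a \<in> range (\<lambda>x. M *v x)"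
  then show "{i. a $ i \<noteq> 0} \<subseteq> J"
    using assms block_supported_mult_vector by (auto simp: pd_on_def)
next
  assume "{i. a $ i \<noteq> 0} \<subseteq> J"
  then show "a \<in> range (\<lambda>x. M *v x)"
    using pd_on_pinv_solves[OF assms] by (metis rangeI)
qed

lemma maskI_eq: "maskI I A = coord_proj I ** A ** coord_proj I"
  by (simp add: vec_eq_iff maskI_def coord_proj_def matrix_mult_diag_mat_left matrix_mult_diag_mat_right)

lemma pd_on_maskI:
  assumes "sym_pd A" shows "pd_on I (maskI I A)"
proof -
  have sym: "transpose A = A" and pd: "\<And>x. x \<noteq> 0 \<Longrightarrow> 0 < x \<bullet> (A *v x)"
    using assms by (auto simp: sym_pd_def)
  have "transpose (maskI I A) = maskI I A"
    by (simp add: vec_eq_iff maskI_def transpose_def symmetric_entry_swap[OF sym] conj_commute)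
  moreover have "block_supported I (maskI I A)" by (simp add: block_supported_def maskI_def)
  moreover have "0 < x \<bullet> (maskI I A *v x)" if "x \<noteq> 0" "\<forall>i. i \<notin> I \<longrightarrow> x $ i = 0" for x
    using that pd by (simp add: maskI_eq quadratic_form_coord_proj coord_proj_fixes)
  ultimately show ?thesis by (simp add: pd_on_def)
qed

lemma pd_on_Adag: "sym_pd A \<Longrightarrow> pd_on I (Adag I A)"
  unfolding Adag_def by (intro pd_on_pinv pd_on_maskI)

lemma quadratic_form_infoM:
  "x \<bullet> (infoM \<I> \<nu> A *v x) = (\<Sum>I\<in>\<I>. \<nu> I * (x \<bullet> (Adag I A *v x)))"
  by (simp add: infoM_def sum_matrix_vector_mult inner_sum_right scaleR_matrix_vector_assoc[symmetric])

lemma infoM_entry: "infoM \<I> \<nu> A $ i $ j = (\<Sum>I\<in>\<I>. \<nu> I * Adag I A $ i $ j)"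
  by (simp add: infoM_def sum_component)

definition design_supp :: "'k set set \<Rightarrow> ('k set \<Rightarrow> real) \<Rightarrow> 'k set" where
  "design_supp \<I> \<nu> = \<Union>{I\<in>\<I>. \<nu> I > 0}"

lemma pd_on_infoM:
  fixes \<I> :: "'k::finite set set"
  assumes A: "sym_pd A" and nonneg: "\<forall>I\<in>\<I>. \<nu> I \<ge> 0"
  shows "pd_on (design_supp \<I> \<nu>) (infoM \<I> \<nu> A)"
proof -
  let ?J = "design_supp \<I> \<nu>"
  have Adag: "pd_on I (Adag I A)" for I using A by (rule pd_on_Adag)
  have "Adag I A $ j $ i = Adag I A $ i $ j" for I i j
    using Adag[of I] by (metis pd_on_def symmetric_entry_swap)
  then have "transpose (infoM \<I> \<nu> A) = infoM \<I> \<nu> A"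
    by (simp add: vec_eq_iff transpose_def infoM_entry)
  moreover have "block_supported ?J (infoM \<I> \<nu> A)"
    unfolding block_supported_def infoM_entry
  proof (intro allI impI sum.neutral ballI)
    fix i j I assume ij: "i \<notin> ?J \<or> j \<notin> ?J" and I: "I \<in> \<I>"
    show "\<nu> I * Adag I A $ i $ j = 0"
    proof (cases "\<nu> I > 0")
      case True
      then have "i \<notin> I \<or> j \<notin> I" using ij I by (auto simp: design_supp_def)
      then show ?thesis using Adag[of I] by (auto simp: pd_on_def block_supported_def)
    qed (use nonneg I in force)
  qed
  moreover have "0 < x \<bullet> (infoM \<I> \<nu> A *v x)"
    if x0: "x \<noteq> 0" and x: "\<forall>i. i \<notin> ?J \<longrightarrow> x $ i = 0" for x
  proof -
    obtain i where xi: "x $ i \<noteq> 0" using x0 by (auto simp: vec_eq_iff)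
    then obtain I where I: "I \<in> \<I>" "\<nu> I > 0" "i \<in> I" using x by (auto simp: design_supp_def)
    have "coord_proj I *v x \<noteq> 0" using xi I by (auto simp: vec_eq_iff coord_proj_mult_vector)
    then have "0 < (coord_proj I *v x) \<bullet> (Adag I A *v (coord_proj I *v x))"
      using Adag[of I] by (simp add: pd_on_def coord_proj_mult_vector)
    also have "\<dots> = x \<bullet> (Adag I A *v x)"
      using Adag[of I] block_supported_quadratic_form by (metis pd_on_def)
    finally have "0 < \<nu> I * (x \<bullet> (Adag I A *v x))" using I by simp
    also have "\<dots> \<le> (\<Sum>I\<in>\<I>. \<nu> I * (x \<bullet> (Adag I A *v x)))"
      using I nonneg pd_on_nonneg[OF Adag] by (intro member_le_sum) auto
    finally show ?thesis by (simp add: quadratic_form_infoM)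
  qed
  ultimately show ?thesis by (simp add: pd_on_def)
qed

definition design_var :: "'k::finite set set \<Rightarrow> real^'k \<Rightarrow> ('k set \<Rightarrow> real) \<Rightarrow> real^'k^'k \<Rightarrow> real" where
  "design_var \<I> a \<nu> A = a \<bullet> (pinv (infoM \<I> \<nu> A) *v a)"

definition dual_obj :: "'k::finite set set \<Rightarrow> real^'k \<Rightarrow> ('k set \<Rightarrow> real) \<Rightarrow> real^'k^'k \<Rightarrow> real^'k \<Rightarrow> real" where
  "dual_obj \<I> a \<nu> A x = 2 * (a \<bullet> x) - (\<Sum>I\<in>\<I>. \<nu> I * (x \<bullet> (Adag I A *v x)))"

lemma design_var_is_max_dual_obj:
  assumes "sym_pd A" and "\<forall>I\<in>\<I>. \<nu> I \<ge> 0" and "{i. a $ i \<noteq> 0} \<subseteq> design_supp \<I> \<nu>"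
  shows "dual_obj \<I> a \<nu> A x \<le> design_var \<I> a \<nu> A" and "\<exists>z. dual_obj \<I> a \<nu> A z = design_var \<I> a \<nu> A"
proof -
  note sup = pd_on_pinv_quadratic_sup[OF pd_on_infoM[OF assms(1,2)] assms(3)]
  show "dual_obj \<I> a \<nu> A x \<le> design_var \<I> a \<nu> A"
    using sup(1)[of x] by (simp add: dual_obj_def design_var_def quadratic_form_infoM)
  show "\<exists>z. dual_obj \<I> a \<nu> A z = design_var \<I> a \<nu> A"
    using sup(2) by (intro exI[of _ "pinv (infoM \<I> \<nu> A) *v a"])
      (simp add: dual_obj_def design_var_def quadratic_form_infoM)
qed

lemma dual_obj_unbounded:
  assumes A: "sym_pd A" and nonneg: "\<forall>I\<in>\<I>. \<nu> I \<ge> 0"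
    and not_supp: "\<not> {i. a $ i \<noteq> 0} \<subseteq> design_supp \<I> \<nu>"
  shows "\<exists>x. dual_obj \<I> a \<nu> A x > B"
proof -
  obtain i where ai: "a $ i \<noteq> 0" and i: "i \<notin> design_supp \<I> \<nu>" using not_supp by blast
  define x where "x = ((\<bar>B\<bar> + 1) / a $ i) *\<^sub>R axis i (1::real)"
  have "\<nu> I * (x \<bullet> (Adag I A *v x)) = 0" if I: "I \<in> \<I>" for I
  proof (cases "\<nu> I > 0")
    case True
    then have "coord_proj I *v x = 0"
      using i I by (auto simp: vec_eq_iff coord_proj_mult_vector x_def axis_def design_supp_def)
    then show ?thesis
      using block_supported_quadratic_form[of I "Adag I A" x] pd_on_Adag[OF A] by (simp add: pd_on_def)
  qed (use nonneg I in force)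
  then have "(\<Sum>I\<in>\<I>. \<nu> I * (x \<bullet> (Adag I A *v x))) = 0" by (intro sum.neutral) blast
  moreover have "a \<bullet> x = \<bar>B\<bar> + 1" using ai by (simp add: x_def inner_axis)
  ultimately have "dual_obj \<I> a \<nu> A x = 2 * (\<bar>B\<bar> + 1)" by (simp add: dual_obj_def)
  then show ?thesis by (intro exI[of _ x]) simp
qed

lemma Fobj_eq_design_var:
  assumes "sym_pd A" and "\<forall>I\<in>\<I>. \<nu> I \<ge> 0"
  shows "Fobj \<I> a \<nu> A =
    (if {i. a $ i \<noteq> 0} \<subseteq> design_supp \<I> \<nu> then ereal (design_var \<I> a \<nu> A) else \<infinity>)"
  using range_pd_on[OF pd_on_infoM[OF assms]] by (simp add: Fobj_def design_var_def)

lemma dual_obj_scale: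
  assumes "c > 0"
  shows "dual_obj \<I> a (\<lambda>I. c * \<nu> I) A x = dual_obj \<I> a \<nu> A (c *\<^sub>R x) / c"
  using assms by (simp add: dual_obj_def matrix_vector_mult_scaleR sum_distrib_left
      sum_divide_distrib field_simps)

lemma dual_obj_antimono:
  assumes "sym_pd A" and "\<forall>I\<in>\<I>. \<mu> I \<le> \<nu> I"
  shows "dual_obj \<I> a \<nu> A x \<le> dual_obj \<I> a \<mu> A x"
  using assms pd_on_nonneg[OF pd_on_Adag]
  by (auto simp: dual_obj_def intro!: sum_mono mult_right_mono)

lemma tendsto_det:
  fixes G :: "'a \<Rightarrow> real^'k::finite^'k"
  assumes "\<And>i j. ((\<lambda>x. G x $ i $ j) \<longlongrightarrow> L $ i $ j) F"
  shows "((\<lambda>x. det (G x)) \<longlongrightarrow> det L) F"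
  unfolding det_def by (intro tendsto_intros assms)

definition cramer_sol :: "real^'k::finite^'k \<Rightarrow> real^'k \<Rightarrow> real^'k" where
  "cramer_sol G b = (\<chi> k. det (\<chi> i j. if j = k then b $ i else G $ i $ j) / det G)"

lemma tendsto_cramer_sol:
  fixes G :: "'a \<Rightarrow> real^'k::finite^'k"
  assumes "\<And>i j. ((\<lambda>x. G x $ i $ j) \<longlongrightarrow> L $ i $ j) F" and "det L \<noteq> 0"
  shows "((\<lambda>x. cramer_sol (G x) b) \<longlongrightarrow> cramer_sol L b) F"
  unfolding cramer_sol_def
  by (intro tendsto_vec_lambda tendsto_divide tendsto_det assms) (simp add: assms)

lemma pinv_pd_on_mult_vector:
  assumes "pd_on J M" shows "pinv M *v b = cramer_sol (M + coord_proj (- J)) b - coord_proj (- J) *v b"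
proof -
  obtain H where HG: "H ** (M + coord_proj (- J)) = mat 1" and GH: "(M + coord_proj (- J)) ** H = mat 1"
    and p: "pinv M = H - coord_proj (- J)"
    using pinv_pd_on[OF assms] by metis
  have "det (M + coord_proj (- J)) \<noteq> 0" using HG GH invertible_det_nz invertible_def by blast
  moreover have "(M + coord_proj (- J)) *v (H *v b) = b" using GH by (simp add: matrix_vector_mul_assoc)
  ultimately have "H *v b = cramer_sol (M + coord_proj (- J)) b"
    using cramer[of "M + coord_proj (- J)" "H *v b" b] by (simp add: cramer_sol_def)
  then show ?thesis by (simp add: p matrix_vector_mult_diff_rdistrib)
qed

(* The pseudoinverse is discontinuous in general, but continuous along matrices that are
   positive definite on one fixed block. *)
lemma tendsto_pinv_mult_vector:
  fixes M :: "'a \<Rightarrow> real^'k::finite^'k"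
  assumes ev: "eventually (\<lambda>x. pd_on J (M x)) F" and L: "pd_on J L"
    and lim: "\<And>i j. ((\<lambda>x. M x $ i $ j) \<longlongrightarrow> L $ i $ j) F"
  shows "((\<lambda>x. pinv (M x) *v b) \<longlongrightarrow> pinv L *v b) F"
proof -
  have "det (L + coord_proj (- J)) \<noteq> 0"
    using pd_on_shift_invertible[OF L] invertible_det_nz by blast
  then have "((\<lambda>x. cramer_sol (M x + coord_proj (- J)) b - coord_proj (- J) *v b) \<longlongrightarrow> pinv L *v b) F"
    unfolding pinv_pd_on_mult_vector[OF L]
    by (intro tendsto_diff tendsto_const tendsto_cramer_sol) (simp_all add: tendsto_add lim)
  then show ?thesis
    by (rule Lim_transform_eventually) (use ev in \<open>auto elim: eventually_mono simp: pinv_pd_on_mult_vector\<close>)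
qed

lemma tendsto_Adag_entry:
  fixes A :: "'a \<Rightarrow> real^'k::finite^'k"
  assumes ev: "eventually (\<lambda>x. sym_pd (A x)) F" and L: "sym_pd L" and lim: "(A \<longlongrightarrow> L) F"
  shows "((\<lambda>x. Adag I (A x) $ i $ j) \<longlongrightarrow> Adag I L $ i $ j) F"
proof -
  have "((\<lambda>x. pinv (maskI I (A x)) *v axis j 1) \<longlongrightarrow> pinv (maskI I L) *v axis j 1) F"
  proof (rule tendsto_pinv_mult_vector)
    show "eventually (\<lambda>x. pd_on I (maskI I (A x))) F"
      using ev by (auto elim: eventually_mono intro: pd_on_maskI)
    show "pd_on I (maskI I L)" using L by (rule pd_on_maskI)
    show "((\<lambda>x. maskI I (A x) $ i $ j) \<longlongrightarrow> maskI I L $ i $ j) F" for i j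
      using tendsto_vec_nth[OF tendsto_vec_nth[OF lim]] by (cases "i \<in> I \<and> j \<in> I") (auto simp: maskI_def)
  qed
  from tendsto_vec_nth[OF this, of i] show ?thesis
    by (simp add: Adag_def matrix_vector_mult_entry axis_def if_distrib if_distribR cong: if_cong)
qed

lemma tendsto_dual_obj:
  fixes A :: "'a \<Rightarrow> real^'k::finite^'k"
  assumes "eventually (\<lambda>x. sym_pd (A x)) F" and "sym_pd L" and "(A \<longlongrightarrow> L) F"
    and "\<And>I. ((\<lambda>x. \<nu> x I) \<longlongrightarrow> \<nu>' I) F"
  shows "((\<lambda>x. dual_obj \<I> a (\<nu> x) (A x) z) \<longlongrightarrow> dual_obj \<I> a \<nu>' L z) F"
  unfolding dual_obj_def quadratic_form_eq_sum
  by (intro tendsto_intros assms tendsto_Adag_entry)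

lemma tendsto_design_var:
  fixes A :: "'a \<Rightarrow> real^'k::finite^'k"
  assumes ev: "eventually (\<lambda>x. sym_pd (A x)) F" and L: "sym_pd L" and lim: "(A \<longlongrightarrow> L) F"
    and nonneg: "\<forall>I\<in>\<I>. \<nu> I \<ge> 0"
  shows "((\<lambda>x. design_var \<I> a \<nu> (A x)) \<longlongrightarrow> design_var \<I> a \<nu> L) F"
proof -
  have "((\<lambda>x. pinv (infoM \<I> \<nu> (A x)) *v a) \<longlongrightarrow> pinv (infoM \<I> \<nu> L) *v a) F"
  proof (rule tendsto_pinv_mult_vector)
    show "eventually (\<lambda>x. pd_on (design_supp \<I> \<nu>) (infoM \<I> \<nu> (A x))) F"
      using ev by (rule eventually_mono) (rule pd_on_infoM[OF _ nonneg])
    show "pd_on (design_supp \<I> \<nu>) (infoM \<I> \<nu> L)" using L nonneg by (rule pd_on_infoM)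
    show "((\<lambda>x. infoM \<I> \<nu> (A x) $ i $ j) \<longlongrightarrow> infoM \<I> \<nu> L $ i $ j) F" for i j
      unfolding infoM_entry by (intro tendsto_intros tendsto_Adag_entry[OF ev L lim])
  qed
  then show ?thesis unfolding design_var_def by (intro tendsto_intros)
qed

lemma Nfeas_design_supp:
  "n \<in> Nfeas \<I> a c B0 t \<Longrightarrow> {i. a $ i \<noteq> 0} \<subseteq> design_supp \<I> (\<lambda>I. real (n I))"
  by (auto simp: Nfeas_def design_supp_def)

lemma dual_obj_n_star_le:
  assumes A: "sym_pd A" and t: "t > 0" and n: "n \<in> n_star \<I> a c B0 t A"
    and m: "m \<in> Nfeas \<I> a c B0 t"
    and \<mu>: "\<forall>I\<in>\<I>. \<mu> I \<ge> 0" "{i. a $ i \<noteq> 0} \<subseteq> design_supp \<I> \<mu>"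
    and s: "s > 0" and m_ge: "\<forall>I\<in>\<I>. s * \<mu> I \<le> real (m I) / t"
  shows "dual_obj \<I> a (\<lambda>I. real (n I) / t) A x \<le> design_var \<I> a \<mu> A / s"
proof -
  have nF: "n \<in> Nfeas \<I> a c B0 t"
    and n_le_m: "design_var \<I> a (\<lambda>I. real (n I)) A \<le> design_var \<I> a (\<lambda>I. real (m I)) A"
    using n m by (auto simp: n_star_def design_var_def)
  have div_t: "(\<lambda>I. real (f I) / t) = (\<lambda>I. (1/t) * real (f I))" for f :: "'a set \<Rightarrow> nat" by auto
  have "dual_obj \<I> a (\<lambda>I. real (n I) / t) A x = t * dual_obj \<I> a (\<lambda>I. real (n I)) A ((1/t) *\<^sub>R x)"
    using dual_obj_scale[of "1/t" \<I> a "\<lambda>I. real (n I)" A x] t unfolding div_t by simp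
  also have "\<dots> \<le> t * design_var \<I> a (\<lambda>I. real (n I)) A"
    using design_var_is_max_dual_obj(1)[OF A _ Nfeas_design_supp[OF nF]] t by simp
  also have "\<dots> \<le> t * design_var \<I> a (\<lambda>I. real (m I)) A" using n_le_m t by simp
  also obtain z where "design_var \<I> a (\<lambda>I. real (m I)) A = dual_obj \<I> a (\<lambda>I. real (m I)) A z"
    using design_var_is_max_dual_obj(2)[OF A _ Nfeas_design_supp[OF m]] by (metis of_nat_0_le_iff)
  also have "t * dual_obj \<I> a (\<lambda>I. real (m I)) A z = dual_obj \<I> a (\<lambda>I. real (m I) / t) A (t *\<^sub>R z)"
    using dual_obj_scale[of "1/t" \<I> a "\<lambda>I. real (m I)" A "t *\<^sub>R z"] t unfolding div_t by simp
  also have "\<dots> \<le> dual_obj \<I> a (\<lambda>I. s * \<mu> I) A (t *\<^sub>R z)"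
    using m_ge by (intro dual_obj_antimono[OF A]) auto
  also have "\<dots> = dual_obj \<I> a \<mu> A (s *\<^sub>R t *\<^sub>R z) / s" using s by (simp add: dual_obj_scale)
  also have "\<dots> \<le> design_var \<I> a \<mu> A / s"
    using design_var_is_max_dual_obj(1)[OF A \<mu>] s by (simp add: divide_right_mono)
  finally show ?thesis .
qed

definition round_down :: "'k set set \<Rightarrow> ('k set \<Rightarrow> real) \<Rightarrow> real \<Rightarrow> 'k set \<Rightarrow> nat" where
  "round_down \<I> \<mu> t I = (if I \<in> \<I> then nat \<lfloor>t * \<mu> I\<rfloor> else 0)"

lemma round_down_in_Nfeas:
  fixes \<I> :: "'k::finite set set"
  assumes t: "t > 0" and \<mu>: "\<mu> \<in> Kset \<I> c B0" and supp: "{i. a $ i \<noteq> 0} \<subseteq> design_supp \<I> \<mu>"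
    and c: "\<forall>I\<in>\<I>. \<forall>j. c I $ j \<ge> 0"
    and large: "\<forall>I\<in>\<I>. \<mu> I > 0 \<longrightarrow> 1 \<le> t * \<mu> I"
  shows "round_down \<I> \<mu> t \<in> Nfeas \<I> a c B0 t"
proof -
  have nonneg: "\<forall>I\<in>\<I>. \<mu> I \<ge> 0" and budget: "\<forall>j. (\<Sum>I\<in>\<I>. \<mu> I * c I $ j) \<le> B0 $ j"
    using \<mu> by (auto simp: Kset_def)
  have "(\<Sum>I\<in>\<I>. real (round_down \<I> \<mu> t I) * c I $ j) \<le> t * B0 $ j" for j
  proof -
    have "(\<Sum>I\<in>\<I>. real (round_down \<I> \<mu> t I) * c I $ j) \<le> (\<Sum>I\<in>\<I>. t * \<mu> I * c I $ j)"
      using c nonneg t by (intro sum_mono mult_right_mono) (auto simp: round_down_def)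
    also have "\<dots> = t * (\<Sum>I\<in>\<I>. \<mu> I * c I $ j)" by (simp add: sum_distrib_left mult.assoc)
    also have "\<dots> \<le> t * B0 $ j" using budget t by simp
    finally show ?thesis .
  qed
  moreover have "{i. a $ i \<noteq> 0} \<subseteq> \<Union>{I\<in>\<I>. round_down \<I> \<mu> t I > 0}"
    using supp large by (fastforce simp: design_supp_def round_down_def)
  ultimately show ?thesis by (auto simp: Nfeas_def round_down_def)
qed

lemma round_down_ge:
  assumes t: "t > 0" and I: "I \<in> \<I>" and nonneg: "\<mu> I \<ge> 0"
    and large: "\<mu> I > 0 \<longrightarrow> 1 \<le> t * ((1 - s) * \<mu> I)"
  shows "s * \<mu> I \<le> real (round_down \<I> \<mu> t I) / t"
proof (cases "\<mu> I > 0")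
  case True
  have "t * \<mu> I - 1 \<le> real (round_down \<I> \<mu> t I)"
    using I t nonneg by (simp add: round_down_def)
  then show ?thesis using t large True by (simp add: field_simps)
qed (use nonneg t in simp)

lemma eventually_round_down:
  fixes \<I> :: "'k::finite set set"
  assumes \<mu>: "\<mu> \<in> Kset \<I> c B0" and supp: "{i. a $ i \<noteq> 0} \<subseteq> design_supp \<I> \<mu>"
    and c: "\<forall>I\<in>\<I>. \<forall>j. c I $ j \<ge> 0" and s: "0 < s" "s < 1"
  shows "\<forall>\<^sub>F t in at_top. t > 0 \<and> round_down \<I> \<mu> t \<in> Nfeas \<I> a c B0 t \<and>
           (\<forall>I\<in>\<I>. s * \<mu> I \<le> real (round_down \<I> \<mu> t I) / t)"
proof -
  have nonneg: "\<forall>I\<in>\<I>. \<mu> I \<ge> 0" using \<mu> by (simp add: Kset_def)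
  have "\<forall>\<^sub>F t in at_top. \<forall>I\<in>\<I>. \<mu> I > 0 \<longrightarrow> 1 \<le> t * ((1 - s) * \<mu> I)"
  proof (intro eventually_ball_finite ballI)
    fix I assume "I \<in> \<I>"
    show "\<forall>\<^sub>F t in at_top. \<mu> I > 0 \<longrightarrow> 1 \<le> t * ((1 - s) * \<mu> I)"
      using eventually_ge_at_top[of "1 / ((1 - s) * \<mu> I)"]
      by eventually_elim (use s in \<open>auto simp: field_simps\<close>)
  qed simp
  moreover have "\<forall>\<^sub>F t in at_top. (t::real) > 0" by (rule eventually_gt_at_top)
  ultimately show ?thesis
  proof eventually_elim
    case (elim t)
    have "\<forall>I\<in>\<I>. \<mu> I > 0 \<longrightarrow> 1 \<le> t * \<mu> I"
    proof (intro ballI impI)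
      fix I assume I: "I \<in> \<I>" "\<mu> I > 0"
      have "t * ((1 - s) * \<mu> I) \<le> t * \<mu> I" using elim I s by (simp add: mult_left_mono)
      moreover have "1 \<le> t * ((1 - s) * \<mu> I)" using elim I by blast
      ultimately show "1 \<le> t * \<mu> I" by linarith
    qed
    then show ?case
      using elim round_down_in_Nfeas[OF _ \<mu> supp c] round_down_ge nonneg by blast
  qed
qed

lemma limit_of_ratios_in_Kset:
  assumes n: "\<forall>k. n k \<in> Nfeas \<I> a c B0 (t k)" and t: "\<forall>k. 0 < t k"
    and lim: "\<And>I. (\<lambda>k. real (n k I) / t k) \<longlonglongrightarrow> \<nu> I"
  shows "\<nu> \<in> Kset \<I> c B0"
  unfolding Kset_def
proof (intro CollectI conjI allI ballI impI)
  fix I assume "I \<notin> \<I>"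
  then have "(\<lambda>k. real (n k I) / t k) = (\<lambda>k. 0)" using n by (simp add: Nfeas_def)
  then show "\<nu> I = 0" using lim[of I] LIMSEQ_unique tendsto_const by metis
next
  fix I
  show "0 \<le> \<nu> I"
    using lim[of I] by (rule LIMSEQ_le_const) (use t in \<open>auto intro!: exI[of _ 0] divide_nonneg_pos\<close>)
next
  fix j
  have "(\<Sum>I\<in>\<I>. real (n k I) / t k * c I $ j) \<le> B0 $ j" for k
  proof -
    have "(\<Sum>I\<in>\<I>. real (n k I) / t k * c I $ j) = (\<Sum>I\<in>\<I>. real (n k I) * c I $ j) / t k"
      by (simp add: sum_divide_distrib)
    also have "\<dots> \<le> B0 $ j" using n t by (simp add: Nfeas_def pos_divide_le_eq mult.commute)
    finally show ?thesis .
  qed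
  moreover have "(\<lambda>k. \<Sum>I\<in>\<I>. real (n k I) / t k * c I $ j) \<longlonglongrightarrow> (\<Sum>I\<in>\<I>. \<nu> I * c I $ j)"
    by (intro tendsto_intros lim)
  ultimately show "(\<Sum>I\<in>\<I>. \<nu> I * c I $ j) \<le> B0 $ j"
    by (intro LIMSEQ_le_const2) auto
qed

(* The rounded-down multiples of mu are feasible integer designs, which the optimal n k must
   beat; their proportions approach mu from below, up to any factor s < 1. *)
lemma dual_obj_limit_le_design_var:
  fixes \<I> :: "'k::finite set set"
  assumes c: "\<forall>I\<in>\<I>. \<forall>j. 0 \<le> c I $ j"
    and As: "sym_pd Astar" and A: "\<forall>k. sym_pd (A k)" and A_lim: "A \<longlonglongrightarrow> Astar"
    and t: "filterlim t at_top sequentially"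
    and n: "\<forall>k. n k \<in> n_star \<I> a c B0 (t k) (A k)"
    and lim: "\<And>I. (\<lambda>k. real (n k I) / t k) \<longlonglongrightarrow> \<nu> I"
    and \<mu>: "\<mu> \<in> Kset \<I> c B0" and supp: "{i. a $ i \<noteq> 0} \<subseteq> design_supp \<I> \<mu>"
  shows "dual_obj \<I> a \<nu> Astar x \<le> design_var \<I> a \<mu> Astar"
proof (rule field_le_mult_one_interval)
  fix s :: real assume s: "0 < s" "s < 1"
  have \<mu>_nonneg: "\<forall>I\<in>\<I>. 0 \<le> \<mu> I" using \<mu> by (simp add: Kset_def)
  have "\<forall>\<^sub>F k in sequentially.
          dual_obj \<I> a (\<lambda>I. real (n k I) / t k) (A k) x \<le> design_var \<I> a \<mu> (A k) / s"
    using filterlim_iff[THEN iffD1, OF t, rule_format, OF eventually_round_down[OF \<mu> supp c s]]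
  proof eventually_elim
    case (elim k)
    then show ?case using dual_obj_n_star_le[OF _ _ _ _ \<mu>_nonneg supp s(1)] A n by blast
  qed
  moreover have "(\<lambda>k. dual_obj \<I> a (\<lambda>I. real (n k I) / t k) (A k) x) \<longlonglongrightarrow> dual_obj \<I> a \<nu> Astar x"
    using A by (intro tendsto_dual_obj As A_lim lim) auto
  moreover have "(\<lambda>k. design_var \<I> a \<mu> (A k) / s) \<longlonglongrightarrow> design_var \<I> a \<mu> Astar / s"
    using A \<mu>_nonneg by (intro tendsto_divide tendsto_design_var As A_lim tendsto_const) (use s in auto)
  ultimately have "dual_obj \<I> a \<nu> Astar x \<le> design_var \<I> a \<mu> Astar / s"
    using tendsto_le[OF sequentially_bot] by blast
  then show "s * dual_obj \<I> a \<nu> Astar x \<le> design_var \<I> a \<mu> Astar" using s by (simp add: field_simps)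
qed

lemma limit_of_ratios_in_nu_star:
  fixes \<I> :: "'k::finite set set"
  assumes c: "\<forall>I\<in>\<I>. \<forall>j. 0 \<le> c I $ j"
    and As: "sym_pd Astar" and A: "\<forall>k. sym_pd (A k)" and A_lim: "A \<longlonglongrightarrow> Astar"
    and t: "filterlim t at_top sequentially" and t_pos: "\<forall>k. 0 < t k"
    and n: "\<forall>k. n k \<in> n_star \<I> a c B0 (t k) (A k)"
    and lim: "\<And>I. (\<lambda>k. real (n k I) / t k) \<longlonglongrightarrow> \<nu> I"
  shows "\<nu> \<in> nu_star \<I> a c B0 Astar"
proof -
  have \<nu>: "\<nu> \<in> Kset \<I> c B0"
    using n t_pos lim by (intro limit_of_ratios_in_Kset) (auto simp: n_star_def)
  then have \<nu>_nonneg: "\<forall>I\<in>\<I>. 0 \<le> \<nu> I" by (simp add: Kset_def)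
  have "Fobj \<I> a \<nu> Astar \<le> Fobj \<I> a \<mu> Astar" if \<mu>: "\<mu> \<in> Kset \<I> c B0" for \<mu>
  proof (cases "{i. a $ i \<noteq> 0} \<subseteq> design_supp \<I> \<mu>")
    case supp\<mu>: True
    note bound = dual_obj_limit_le_design_var[OF c As A A_lim t n lim \<mu> supp\<mu>]
    have \<mu>_nonneg: "\<forall>I\<in>\<I>. 0 \<le> \<mu> I" using \<mu> by (simp add: Kset_def)
    show ?thesis
    proof (cases "{i. a $ i \<noteq> 0} \<subseteq> design_supp \<I> \<nu>")
      case True
      then obtain z where "dual_obj \<I> a \<nu> Astar z = design_var \<I> a \<nu> Astar"
        using design_var_is_max_dual_obj(2)[OF As \<nu>_nonneg] by blast
      then show ?thesis
        using bound[of z] True supp\<mu> by (simp add: Fobj_eq_design_var[OF As] \<nu>_nonneg \<mu>_nonneg)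
    next
      case False
      then show ?thesis
        using dual_obj_unbounded[OF As \<nu>_nonneg] bound by (meson not_le)
    qed
  qed (use \<mu> in \<open>simp add: Fobj_eq_design_var[OF As] Kset_def\<close>)
  then show ?thesis using \<nu> by (simp add: nu_star_def)
qed

lemma Nfeas_ratio_le:
  fixes \<I> :: "'k::finite set set"
  assumes n: "n \<in> Nfeas \<I> a c B0 t" and t: "t > 0" and c: "\<forall>I\<in>\<I>. \<forall>j. 0 \<le> c I $ j"
    and I: "I \<in> \<I>" and cI: "c I $ j > 0"
  shows "real (n I) / t \<le> B0 $ j / c I $ j"
proof -
  have "real (n I) * c I $ j \<le> (\<Sum>I'\<in>\<I>. real (n I') * c I' $ j)"
    using I c by (intro member_le_sum) auto
  also have "\<dots> \<le> t * B0 $ j" using n by (simp add: Nfeas_def)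
  finally show ?thesis using t cI by (simp add: field_simps)
qed

lemma n_star_ratios_subseq_tendsto:
  fixes \<I> :: "'k::finite set set"
  assumes c: "\<forall>I\<in>\<I>. (\<forall>j. c I $ j \<ge> 0) \<and> (\<exists>j. c I $ j > 0)"
    and As: "sym_pd Astar" and A: "\<forall>k. sym_pd (A k)" and A_lim: "A \<longlonglongrightarrow> Astar"
    and t: "filterlim t at_top sequentially" and t_pos: "\<forall>k. 0 < t k"
    and n: "\<forall>k. n k \<in> n_star \<I> a c B0 (t k) (A k)"
    and unique: "nu_star \<I> a c B0 Astar = {\<nu>0}"
  obtains r where "strict_mono r" "\<And>I. (\<lambda>k. real (n (r k) I) / t (r k)) \<longlonglongrightarrow> \<nu>0 I"
proof -
  have c_nonneg: "\<forall>I\<in>\<I>. \<forall>j. 0 \<le> c I $ j" using c by blast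
  define v where "v k = (\<chi> I. real (n k I) / t k)" for k
  define bound where "bound I = (if I \<in> \<I> then B0 $ (SOME j. c I $ j > 0) / c I $ (SOME j. c I $ j > 0) else 0)" for I
  have "\<bar>v k $ I\<bar> \<le> bound I" for k I
  proof (cases "I \<in> \<I>")
    case True
    then have "c I $ (SOME j. c I $ j > 0) > 0" using c by (metis someI_ex)
    then have "real (n k I) / t k \<le> bound I"
      using n t_pos Nfeas_ratio_le[OF _ _ c_nonneg True, of "n k" a B0 "t k"]
      by (simp add: bound_def True n_star_def)
    then show ?thesis using t_pos by (simp add: v_def less_imp_le)
  qed (use n in \<open>simp add: v_def bound_def n_star_def Nfeas_def\<close>)
  then have "norm (v k) \<le> (\<Sum>I\<in>UNIV. bound I)" for k
    using norm_le_l1_cart[of "v k"] sum_mono[of UNIV "\<lambda>I. \<bar>v k $ I\<bar>" bound] by simp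
  then have "bounded (range v)" by (auto simp: bounded_iff)
  then obtain r \<nu> where r: "strict_mono r" and v_lim: "(v \<circ> r) \<longlonglongrightarrow> \<nu>"
    using bounded_imp_convergent_subsequence by blast
  have lim: "(\<lambda>k. real (n (r k) I) / t (r k)) \<longlonglongrightarrow> \<nu> $ I" for I
    using tendsto_vec_nth[OF v_lim, of I] by (simp add: v_def o_def)
  have "(\<lambda>I. \<nu> $ I) \<in> nu_star \<I> a c B0 Astar"
  proof (rule limit_of_ratios_in_nu_star[where A = "\<lambda>k. A (r k)", OF c_nonneg As _ _ _ _ _ lim])
    show "(\<lambda>k. A (r k)) \<longlonglongrightarrow> Astar" using LIMSEQ_subseq_LIMSEQ[OF A_lim r] by (simp add: o_def)
    show "filterlim (\<lambda>k. t (r k)) at_top sequentially"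
      using t filterlim_subseq[OF r] by (rule filterlim_compose)
  qed (use A t_pos n in auto)
  then show ?thesis using that[OF r] lim unique by auto
qed

theorem lemmaE5:
  fixes \<I> :: "'k::finite set set" and a :: "real^'k"
    and c :: "'k set \<Rightarrow> real^'m::finite" and B0 :: "real^'m"
    and Astar :: "real^'k^'k" and A :: "nat \<Rightarrow> real^'k^'k"
    and \<nu>0 :: "'k set \<Rightarrow> real"
  assumes "\<forall>I\<in>\<I>. I \<noteq> {}"
    and "a \<noteq> 0"
    and "{i. a $ i \<noteq> 0} \<subseteq> \<Union>\<I>"
    and "\<forall>I\<in>\<I>. (\<forall>j. c I $ j \<ge> 0) \<and> (\<exists>j. c I $ j > 0)"
    and "\<forall>j. B0 $ j > 0"
    and "sym_pd Astar"
    and "nu_star \<I> a c B0 Astar = {\<nu>0}"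
    and "\<forall>N. sym_pd (A N)"
    and "A \<longlonglongrightarrow> Astar"
  shows "\<forall>\<epsilon>>0. \<exists>N1::real. \<forall>(N::nat) (t::real) n.
           real N \<ge> N1 \<longrightarrow> t \<ge> N1 \<longrightarrow> n \<in> n_star \<I> a c B0 t (A N) \<longrightarrow>
           sqrt (\<Sum>I\<in>\<I>. (real (n I) / t - \<nu>0 I)\<^sup>2) < \<epsilon>"
proof (rule ccontr)
  let ?dist = "\<lambda>n t. sqrt (\<Sum>I\<in>\<I>. (real (n I) / t - \<nu>0 I)\<^sup>2)"
  assume "\<not> ?thesis"
  then obtain \<epsilon> where "\<epsilon> > 0" and "\<forall>k::nat. \<exists>N t n. real k + 1 \<le> real N \<and> real k + 1 \<le> t \<and>
      n \<in> n_star \<I> a c B0 t (A N) \<and> \<epsilon> \<le> ?dist n t"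
    unfolding not_all not_imp not_ex not_less by blast
  then obtain N t n where bad: "\<forall>k. real k + 1 \<le> real (N k) \<and> real k + 1 \<le> t k \<and>
      n k \<in> n_star \<I> a c B0 (t k) (A (N k)) \<and> \<epsilon> \<le> ?dist (n k) (t k)"
    by (simp only: choice_iff) blast
  have N: "k \<le> N k" and t: "real k + 1 \<le> t k" for k
    using bad[rule_format, of k] by linarith+
  have t_ge: "real k \<le> t k" for k using t[of k] by linarith
  have t_pos: "\<forall>k. 0 < t k" using t by (smt (verit) of_nat_0_le_iff)
  have "filterlim t at_top sequentially"
    using t_ge by (intro filterlim_at_top_mono[OF filterlim_real_sequentially] always_eventually) auto
  moreover have "filterlim N at_top sequentially"
    using N by (intro filterlim_at_top_mono[OF filterlim_ident] always_eventually) auto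
  then have "(\<lambda>k. A (N k)) \<longlonglongrightarrow> Astar" using assms(9) by (rule filterlim_compose[rotated])
  ultimately obtain r where "\<And>I. (\<lambda>k. real (n (r k) I) / t (r k)) \<longlonglongrightarrow> \<nu>0 I"
    using n_star_ratios_subseq_tendsto[where A = "\<lambda>k. A (N k)" and n = n, OF assms(4,6) _ _ _ t_pos _ assms(7)]
      assms(8) bad by blast
  then have "(\<lambda>k. ?dist (n (r k)) (t (r k))) \<longlonglongrightarrow> sqrt (\<Sum>I\<in>\<I>. (\<nu>0 I - \<nu>0 I)\<^sup>2)"
    by (intro tendsto_intros)
  then have "\<epsilon> \<le> sqrt (\<Sum>I\<in>\<I>. (\<nu>0 I - \<nu>0 I)\<^sup>2)"
    by (rule LIMSEQ_le_const) (use bad in blast)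
  then show False using \<open>\<epsilon> > 0\<close> by simp
qed

end
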